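(* Every symmetric log-concave probability measure $\mu$ on $\mathbb R$ satisfies the dilation inequality for $\mathcal K_s^1(\mathbb R)$ with $\kappa=2$, i.e. $\mu^*(K)\ge-2(1-\mu(K))\log(1-\mu(K))$ for every nonempty symmetric open interval $K\subset\mathbb R$.
   Context: $\mathcal K_s^1(\mathbb R)$: nonempty symmetric open convex subsets of $\mathbb R$. For Borel $A\subset\mathbb R$, $\varepsilon\in(0,1)$: $A_\varepsilon:=A\cup\{x:\exists y,\ \int_0^1\mathbf 1_A((1-t)x+ty)\,dt>1-\varepsilon\}$; $\mu^*(A):=\liminf_{\varepsilon\downarrow0}(\mu(A_\varepsilon)-\mu(A))/\varepsilon$. A measure $\mu$ is log-concave if $\mu((1-t)A+tB)\ge\mu(A)^{1-t}\mu(B)^t$ for all compact $A,B$ and $t\in(0,1)$. *)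

theory Defs
  imports "HOL-Probability.Probability"
begin

definition Ks1 :: "real set set" where
  "Ks1 = {K. K \<noteq> {} \<and> open K \<and> convex K \<and> uminus ` K = K}"

definition dil_set :: "real set \<Rightarrow> real \<Rightarrow> real set" where
  "dil_set A \<epsilon> = A \<union> {x. \<exists>y. (LINT t:{0..1}|lborel. indicator A ((1 - t) * x + t * y)) > 1 - \<epsilon>}"

definition dil_meas :: "real measure \<Rightarrow> real set \<Rightarrow> ereal" where
  "dil_meas \<mu> A = Liminf (at_right 0)
      (\<lambda>\<epsilon>. ereal ((measure \<mu> (dil_set A \<epsilon>) - measure \<mu> A) / \<epsilon>))"

definition symmetric_measure :: "real measure \<Rightarrow> bool" where
  "symmetric_measure \<mu> \<longleftrightarrow> (\<forall>A \<in> sets borel. measure \<mu> (uminus ` A) = measure \<mu> A)"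

definition log_concave_measure :: "real measure \<Rightarrow> bool" where
  "log_concave_measure \<mu> \<longleftrightarrow>
     (\<forall>A B t. compact A \<longrightarrow> compact B \<longrightarrow> 0 < t \<longrightarrow> t < 1 \<longrightarrow>
        measure \<mu> {(1 - t) * a + t * b | a b. a \<in> A \<and> b \<in> B}
          \<ge> measure \<mu> A powr (1 - t) * measure \<mu> B powr t)"

end

theory Submission
  imports Defs
begin

text \<open>
  A set in \<open>Ks1\<close> is either \<open>\<real>\<close>, which is trivial, or an interval \<open>(-a, a)\<close>.
  A point \<open>x \<ge> a\<close> spends at most the fraction \<open>2a / (x + a)\<close> of any segment starting
  at \<open>x\<close> inside \<open>(-a, a)\<close>, with equality for the segment to \<open>-a\<close>; hence the
  \<open>\<epsilon>\<close>-dilation of \<open>(-a, a)\<close> is exactly \<open>(-s, s)\<close> with \<open>s = a (1 + \<epsilon>) / (1 - \<epsilon>)\<close>.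
  Log-concavity of the tail function \<open>r \<mapsto> \<mu>[r, \<infinity>)\<close>, together with \<open>\<mu>[0, \<infinity>) \<ge> 1/2\<close>
  from symmetry, gives \<open>2\<mu>[s, \<infinity>) \<le> (2\<mu>[a, \<infinity>)) ^ (s/a)\<close>, i.e.
  \<open>1 - \<mu>(K\<^sub>\<epsilon>) \<le> (1 - \<mu>(K)) ^ ((1 + \<epsilon>)/(1 - \<epsilon>))\<close>. Differentiating the right-hand side at
  \<open>\<epsilon> = 0\<close> yields the bound \<open>-2 (1 - \<mu>(K)) log (1 - \<mu>(K))\<close>.
\<close>

lemma Ks1_cases:
  assumes "K \<in> Ks1"
  obtains "K = UNIV" | a where "a > 0" "K = {-a<..<a}"
proof -
  have ne: "K \<noteq> {}" and op: "open K" and cv: "convex K" and sy: "uminus ` K = K"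
    using assms by (auto simp: Ks1_def)
  have neg: "-x \<in> K" if "x \<in> K" for x
    using that sy by (metis image_eqI minus_minus)
  have iv: "x \<in> K" if "u \<in> K" "v \<in> K" "u \<le> x" "x \<le> v" for u v x
    using cv that unfolding is_interval_convex_1[symmetric] is_interval_1 by blast
  obtain x0 where "x0 \<in> K" using ne by auto
  have zero: "0 \<in> K"
    using iv[of "-\<bar>x0\<bar>" "\<bar>x0\<bar>" 0] \<open>x0 \<in> K\<close> neg[OF \<open>x0 \<in> K\<close>]
    by (cases "x0 \<ge> 0") auto
  show thesis
  proof (cases "bdd_above K")
    case False
    have "x \<in> K" for x
    proof -
      obtain y where "y \<in> K" "\<bar>x\<bar> < y"
        using False by (meson bdd_above.I linorder_not_le)
      then have "\<bar>x\<bar> \<in> K" using iv[OF zero] by auto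
      then show ?thesis using neg by (cases "x \<ge> 0") force+
    qed
    then show thesis using that(1) by auto
  next
    case bdd: True
    define a where "a = Sup K"
    have "a \<notin> K"
    proof
      assume "a \<in> K"
      then obtain e where "e > 0" "ball a e \<subseteq> K" using op open_contains_ball by blast
      then have "a + e/2 \<in> K" by (auto simp: dist_real_def)
      then have "a + e/2 \<le> a" unfolding a_def using bdd by (rule cSup_upper)
      with \<open>e > 0\<close> show False by simp
    qed
    then have "a > 0"
      using zero bdd unfolding a_def
      by (metis cSup_upper less_eq_real_def)
    have "K = {-a<..<a}"
    proof (intro set_eqI iffI)
      fix x assume "x \<in> K"
      with neg have "-x \<in> K" by blast
      with \<open>x \<in> K\<close> have "x \<le> a" "-x \<le> a" "x \<noteq> a" "-x \<noteq> a"
        using bdd \<open>a \<notin> K\<close> unfolding a_def by (auto intro: cSup_upper)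
      then show "x \<in> {-a<..<a}" by auto
    next
      fix x assume "x \<in> {-a<..<a}"
      then have "\<bar>x\<bar> < Sup K" unfolding a_def by auto
      then obtain y where "y \<in> K" "\<bar>x\<bar> < y"
        using less_cSup_iff[OF ne bdd] by auto
      then have "\<bar>x\<bar> \<in> K" using iv[OF zero] by auto
      then show "x \<in> K" using neg by (cases "x \<ge> 0") force+
    qed
    with \<open>a > 0\<close> show thesis by (rule that(2))
  qed
qed

definition segment_times :: "real set \<Rightarrow> real \<Rightarrow> real \<Rightarrow> real set" where
  "segment_times A x y = {t \<in> {0..1}. (1 - t) * x + t * y \<in> A}"

lemma segment_times_fmeasurable:
  assumes "A \<in> sets borel"
  shows "segment_times A x y \<in> fmeasurable lborel"
proof (rule fmeasurableI2[of "{0..1}"])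
  show "segment_times A x y \<in> sets lborel"
    unfolding segment_times_def using assms by measurable
qed (auto simp: segment_times_def fmeasurable_def)

lemma set_integral_indicator_segment:
  assumes "A \<in> sets borel"
  shows "(LINT t:{0..1}|lborel. indicator A ((1 - t) * x + t * y)) = measure lborel (segment_times A x y)"
proof -
  have "(LINT t:{0..1}|lborel. indicator A ((1 - t) * x + t * y)) =
      (LINT t|lborel. indicator (segment_times A x y) t)"
    unfolding set_lebesgue_integral_def
    by (rule Bochner_Integration.integral_cong) (auto simp: segment_times_def split: split_indicator)
  also have "\<dots> = measure lborel (segment_times A x y)"
    using segment_times_fmeasurable[OF assms] by (simp add: fmeasurable_def)
  finally show ?thesis .
qed

lemma segment_times_uminus: "segment_times (uminus ` A) (-x) (-y) = segment_times A x y"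
proof -
  have "(1 - t) * -x + t * -y = - ((1 - t) * x + t * y)" for t :: real by simp
  moreover have "-z \<in> uminus ` A \<longleftrightarrow> z \<in> A" for z :: real by force
  ultimately show ?thesis unfolding segment_times_def by presburger
qed

text \<open>A segment starting at \<open>x \<ge> a\<close> stays in \<open>(-a, a)\<close> for a time interval of length at most
  \<open>min 1 ((x + a)/d) - (x - a)/d \<le> 2a/(x + a)\<close>, where \<open>d = x - y\<close>.\<close>
lemma measure_segment_times_interval_le:
  assumes "a > 0" "x \<ge> a"
  shows "measure lborel (segment_times {-a<..<a} x y) \<le> 2 * a / (x + a)"
proof (cases "y < x")
  case False
  have "(1 - t) * x + t * y \<ge> x" if "t \<ge> 0" for t
    using mult_left_mono[of x y t] False that by (simp add: algebra_simps)
  then have "segment_times {-a<..<a} x y = {}"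
    using assms by (force simp: segment_times_def)
  then show ?thesis using assms by simp
next
  case True
  define d where "d = x - y"
  define p where "p = (x - a) / d"
  define q where "q = min 1 ((x + a) / d)"
  have d: "d > 0" using True by (simp add: d_def)
  have sub: "segment_times {-a<..<a} x y \<subseteq> {p<..q}"
  proof
    fix t assume "t \<in> segment_times {-a<..<a} x y"
    then have "t \<le> 1" "x - t * d < a" "x - t * d > -a"
      by (auto simp: segment_times_def d_def algebra_simps)
    with d show "t \<in> {p<..q}" by (simp add: p_def q_def field_simps)
  qed
  have "q - p \<le> 2 * a / (x + a)"
  proof (cases "d \<ge> x + a")
    case True
    have "q - p \<le> (x + a) / d - (x - a) / d" by (simp add: q_def p_def)
    also have "\<dots> = 2 * a / d" using d by (simp add: field_simps)
    also have "\<dots> \<le> 2 * a / (x + a)" using True assms by (intro divide_left_mono) auto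
    finally show ?thesis .
  next
    case False
    have "(x - a) / (x + a) \<le> (x - a) / d" using False assms d by (intro divide_left_mono) auto
    then have "q - p \<le> 1 - (x - a) / (x + a)" by (simp add: q_def p_def)
    also have "\<dots> = 2 * a / (x + a)" using assms by (simp add: field_simps)
    finally show ?thesis .
  qed
  moreover have "measure lborel (segment_times {-a<..<a} x y) \<le> max 0 (q - p)"
  proof (cases "p \<le> q")
    case True
    have "measure lborel (segment_times {-a<..<a} x y) \<le> measure lborel {p<..q}"
      using sub segment_times_fmeasurable[of "{-a<..<a}" x y] True
      by (intro measure_mono_fmeasurable) (auto simp: fmeasurable_def ennreal_less_top)
    with True show ?thesis by simp
  qed (use sub in auto)
  moreover have "0 \<le> 2 * a / (x + a)" using assms by simp
  ultimately show ?thesis by linarith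
qed

lemma measure_segment_times_interval_ge:
  assumes "a > 0" "x \<ge> a"
  shows "measure lborel (segment_times {-a<..<a} x (-a)) \<ge> 2 * a / (x + a)"
proof -
  define c where "c = (x - a) / (x + a)"
  have c: "0 \<le> c" "c < 1" using assms by (auto simp: c_def field_simps)
  have "{c<..<1} \<subseteq> segment_times {-a<..<a} x (-a)"
  proof
    fix t assume "t \<in> {c<..<1}"
    then have "0 \<le> t" "t \<le> 1" "t * (x + a) < x + a" using c assms by auto
    moreover have "x - a < t * (x + a)"
      using \<open>t \<in> {c<..<1}\<close> assms by (simp add: c_def field_simps)
    ultimately show "t \<in> segment_times {-a<..<a} x (-a)" by (auto simp: segment_times_def algebra_simps)
  qed
  then have "measure lborel {c<..<1} \<le> measure lborel (segment_times {-a<..<a} x (-a))"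
    by (intro measure_mono_fmeasurable segment_times_fmeasurable) auto
  moreover have "measure lborel {c<..<1} = 2 * a / (x + a)"
    using c assms by (simp add: c_def field_simps)
  ultimately show ?thesis by simp
qed

lemma ex_segment_times_interval_gt_iff:
  assumes "a > 0" "\<bar>x\<bar> \<ge> a" "0 < e" "e < 1"
  shows "(\<exists>y. measure lborel (segment_times {-a<..<a} x y) > 1 - e) \<longleftrightarrow> \<bar>x\<bar> < a * (1 + e) / (1 - e)"
proof -
  have "uminus ` {-a<..<a} = {-a<..<a}"
    by (auto simp: image_iff intro: bexI[of _ "- z" for z])
  then have reflect: "segment_times {-a<..<a} (-x) (-y) = segment_times {-a<..<a} x y" for x y
    by (metis segment_times_uminus)
  have abs: "(\<exists>y. measure lborel (segment_times {-a<..<a} x y) > 1 - e) \<longleftrightarrow>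
      (\<exists>y. measure lborel (segment_times {-a<..<a} \<bar>x\<bar> y) > 1 - e)"
  proof (cases "x \<ge> 0")
    case False
    then show ?thesis using reflect[of x] by (metis abs_of_neg minus_minus not_le)
  qed simp
  have "2 * a / (\<bar>x\<bar> + a) > 1 - e \<longleftrightarrow> \<bar>x\<bar> < a * (1 + e) / (1 - e)"
    using assms by (simp add: field_simps)
  then show ?thesis
    unfolding abs
    using measure_segment_times_interval_le[OF assms(1,2)]
      measure_segment_times_interval_ge[OF assms(1,2)]
    by (meson less_le_trans order.strict_trans2)
qed

lemma dil_set_interval:
  assumes "a > 0" "0 < e" "e < 1"
  shows "dil_set {-a<..<a} e = {-(a * (1 + e) / (1 - e))<..<a * (1 + e) / (1 - e)}"
    (is "_ = {-?s<..<?s}")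
proof (intro set_eqI)
  fix x
  have "dil_set {-a<..<a} e =
      {-a<..<a} \<union> {x. \<exists>y. measure lborel (segment_times {-a<..<a} x y) > 1 - e}"
    unfolding dil_set_def set_integral_indicator_segment[OF borel_open[OF open_greaterThanLessThan]] ..
  moreover have "a \<le> ?s" using assms by (simp add: field_simps)
  ultimately show "x \<in> dil_set {-a<..<a} e \<longleftrightarrow> x \<in> {-?s<..<?s}"
    using ex_segment_times_interval_gt_iff[OF assms(1) _ assms(2,3), of x]
    by (cases "\<bar>x\<bar> < a") (auto simp: abs_less_iff)
qed

lemma tendsto_measure_atLeastAtMost_atLeast:
  fixes \<mu> :: "real measure"
  assumes "finite_measure \<mu>" "sets \<mu> = sets borel"
  shows "(\<lambda>n. measure \<mu> {c..c + real n}) \<longlonglongrightarrow> measure \<mu> {c..}"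
proof -
  have "incseq (\<lambda>n. {c..c + real n})"
    unfolding incseq_def by simp
  moreover have "range (\<lambda>n. {c..c + real n}) \<subseteq> sets \<mu>"
    unfolding assms(2) by (intro image_subsetI) simp
  ultimately have "(\<lambda>n. measure \<mu> {c..c + real n}) \<longlonglongrightarrow> measure \<mu> (\<Union>n. {c..c + real n})"
    by (intro finite_measure.finite_Lim_measure_incseq[OF assms(1)])
  moreover have "(\<Union>n. {c..c + real n}) = {c..}"
  proof (intro set_eqI iffI)
    fix x assume "x \<in> {c..}"
    moreover obtain n :: nat where "x - c \<le> real n" using real_arch_simple by blast
    ultimately show "x \<in> (\<Union>n. {c..c + real n})" by (auto intro!: exI[of _ n])
  qed auto
  ultimately show ?thesis by simp
qed

lemma log_concave_measure_atLeast:
  fixes \<mu> :: "real measure"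
  assumes "finite_measure \<mu>" "sets \<mu> = sets borel" "log_concave_measure \<mu>" "0 < t" "t < 1"
  shows "measure \<mu> {(1 - t) * c + t * d..} \<ge> measure \<mu> {c..} powr (1 - t) * measure \<mu> {d..} powr t"
proof -
  have bounded: "measure \<mu> {c..c + real n} powr (1 - t) * measure \<mu> {d..d + real n} powr t
      \<le> measure \<mu> {(1 - t) * c + t * d..}" for n
  proof -
    let ?C = "{(1 - t) * a + t * b | a b. a \<in> {c..c + real n} \<and> b \<in> {d..d + real n}}"
    have "?C = (\<lambda>p. (1 - t) * fst p + t * snd p) ` ({c..c + real n} \<times> {d..d + real n})"
      by (auto simp: image_def Bex_def)
    then have "compact ?C"
      by (simp only:) (intro compact_continuous_image compact_Times compact_Icc continuous_intros)
    moreover have "?C \<subseteq> {(1 - t) * c + t * d..}"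
    proof
      fix z assume "z \<in> ?C"
      then obtain a b where "z = (1 - t) * a + t * b" "c \<le> a" "d \<le> b" by auto
      with assms(4,5) show "z \<in> {(1 - t) * c + t * d..}"
        by (simp add: add_mono mult_left_mono)
    qed
    ultimately have "measure \<mu> ?C \<le> measure \<mu> {(1 - t) * c + t * d..}"
      using assms(2) by (intro finite_measure.finite_measure_mono[OF assms(1)]) (auto simp: borel_compact)
    moreover have "measure \<mu> {c..c + real n} powr (1 - t) * measure \<mu> {d..d + real n} powr t
        \<le> measure \<mu> ?C"
      using assms(3-5) unfolding log_concave_measure_def by (simp only: compact_Icc)
    ultimately show ?thesis by linarith
  qed
  have "(\<lambda>n. measure \<mu> {c..c + real n} powr (1 - t) * measure \<mu> {d..d + real n} powr t)
      \<longlonglongrightarrow> measure \<mu> {c..} powr (1 - t) * measure \<mu> {d..} powr t"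
    using assms(4,5) tendsto_measure_atLeastAtMost_atLeast[OF assms(1,2)]
    by (intro tendsto_mult tendsto_powr') auto
  then show ?thesis
    by (rule LIMSEQ_le_const2) (use bounded in blast)
qed

lemma tendsto_powr_dilation_quotient:
  fixes G :: real
  assumes "G \<ge> 0"
  shows "((\<lambda>e. (G - G powr ((1 + e) / (1 - e))) / e) \<longlongrightarrow> - 2 * G * ln G) (at_right 0)"
proof (cases "G = 0")
  case False
  define g where "g e = exp ((1 + e) / (1 - e) * ln G)" for e :: real
  have "(g has_field_derivative exp ((1 + 0) / (1 - 0) * ln G) * (2 * ln G)) (at 0)"
    unfolding g_def by (rule derivative_eq_intros refl | simp)+
  then have "(g has_field_derivative 2 * G * ln G) (at 0)"
    using assms False by (simp add: mult.assoc mult.left_commute)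
  then have "((\<lambda>e. (g e - g 0) / (e - 0)) \<longlongrightarrow> 2 * G * ln G) (at_right 0)"
    unfolding has_field_derivative_iff by (rule filterlim_mono) (simp_all add: at_le)
  then have "((\<lambda>e. - ((g e - g 0) / (e - 0))) \<longlongrightarrow> - (2 * G * ln G)) (at_right 0)"
    by (rule tendsto_minus)
  moreover have "- ((g e - g 0) / (e - 0)) = (G - G powr ((1 + e) / (1 - e))) / e" for e
    using assms False by (simp add: g_def powr_def minus_divide_left algebra_simps)
  ultimately show ?thesis by simp
qed simp

context
  fixes \<mu> :: "real measure"
  assumes prob: "prob_space \<mu>" and borel: "sets \<mu> = sets borel" and sym: "symmetric_measure \<mu>"
begin

lemma measure_atMost_uminus: "measure \<mu> {..-a} = measure \<mu> {a..}"
proof -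
  have "uminus ` {a..} = {..-a}"
    by (auto simp: image_iff intro: bexI[of _ "- x" for x])
  then show ?thesis
    using sym unfolding symmetric_measure_def by (metis atLeast_borel)
qed

lemma measure_atLeast_0_ge_half: "measure \<mu> {0..} \<ge> 1 / 2"
proof -
  have "{0..} \<union> {..0} = (UNIV :: real set)" by auto
  then have "1 = measure \<mu> ({0..} \<union> {..0})"
    using prob_space.prob_space[OF prob] sets_eq_imp_space_eq[OF borel] by simp
  also have "\<dots> \<le> measure \<mu> {0..} + measure \<mu> {..0}"
    using borel finite_measure.emeasure_finite[OF prob_space.finite_measure[OF prob]]
    by (intro measure_subadditive) auto
  finally show ?thesis using measure_atMost_uminus[of 0] by simp
qed

lemma one_minus_measure_interval:
  assumes "a > 0"
  shows "1 - measure \<mu> {-a<..<a} = 2 * measure \<mu> {a..}"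
proof -
  have "1 - measure \<mu> {-a<..<a} = measure \<mu> (space \<mu> - {-a<..<a})"
    using prob_space.prob_compl[OF prob, of "{-a<..<a}"] borel by simp
  also have "space \<mu> - {-a<..<a} = {..-a} \<union> {a..}"
    using sets_eq_imp_space_eq[OF borel] by auto
  also have "measure \<mu> \<dots> = measure \<mu> {..-a} + measure \<mu> {a..}"
    using borel assms
    by (intro finite_measure.finite_measure_Union[OF prob_space.finite_measure[OF prob]]) auto
  finally show ?thesis using measure_atMost_uminus[of a] by simp
qed

lemma tail_le_powr:
  assumes "log_concave_measure \<mu>" "0 < r" "r < s"
  shows "2 * measure \<mu> {s..} \<le> (2 * measure \<mu> {r..}) powr (s / r)"
proof -
  define t where "t = r / s"
  have t: "0 < t" "t < 1" "(1 - t) * 0 + t * s = r" using assms(2,3) by (auto simp: t_def)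
  have "(2 * measure \<mu> {s..}) powr t = 2 * (1 / 2) powr (1 - t) * measure \<mu> {s..} powr t"
    by (simp add: powr_mult powr_diff powr_divide)
  also have "\<dots> \<le> 2 * (measure \<mu> {0..} powr (1 - t) * measure \<mu> {s..} powr t)"
    using measure_atLeast_0_ge_half t by (simp add: mult_right_mono powr_mono2)
  also have "\<dots> \<le> 2 * measure \<mu> {r..}"
    using log_concave_measure_atLeast[OF prob_space.finite_measure[OF prob] borel assms(1) t(1,2),
        of 0 s] t(3) by simp
  finally have "(2 * measure \<mu> {s..}) powr t \<le> 2 * measure \<mu> {r..}" .
  then have "((2 * measure \<mu> {s..}) powr t) powr (s / r) \<le> (2 * measure \<mu> {r..}) powr (s / r)"
    using assms(2,3) by (intro powr_mono2) auto
  then show ?thesis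
    using assms(2,3) by (simp add: powr_powr t_def)
qed

lemma one_minus_measure_dil_set_interval_le:
  assumes "log_concave_measure \<mu>" "a > 0" "0 < e" "e < 1"
  shows "1 - measure \<mu> (dil_set {-a<..<a} e) \<le> (1 - measure \<mu> {-a<..<a}) powr ((1 + e) / (1 - e))"
proof -
  define s where "s = a * (1 + e) / (1 - e)"
  have "a < s" "s / a = (1 + e) / (1 - e)"
    using assms(2-4) by (auto simp: s_def field_simps)
  moreover have "1 - measure \<mu> {-s<..<s} = 2 * measure \<mu> {s..}"
    using \<open>a < s\<close> assms(2) by (intro one_minus_measure_interval) simp
  ultimately show ?thesis
    using tail_le_powr[OF assms(1,2), of s]
    by (simp add: dil_set_interval[OF assms(2-4)] one_minus_measure_interval[OF assms(2)]
        s_def[symmetric])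
qed

lemma dil_meas_interval_ge:
  assumes "log_concave_measure \<mu>" "a > 0"
  shows "dil_meas \<mu> {-a<..<a} \<ge> ereal (- 2 * (1 - measure \<mu> {-a<..<a}) * ln (1 - measure \<mu> {-a<..<a}))"
proof -
  define G where "G = 1 - measure \<mu> {-a<..<a}"
  define \<phi> where "\<phi> e = (G - G powr ((1 + e) / (1 - e))) / e" for e
  have "\<phi> e \<le> (measure \<mu> (dil_set {-a<..<a} e) - measure \<mu> {-a<..<a}) / e" if "0 < e" "e < 1" for e
    using one_minus_measure_dil_set_interval_le[OF assms that] that
    unfolding \<phi>_def G_def by (intro divide_right_mono) auto
  then have "\<forall>\<^sub>F e in at_right 0. ereal (\<phi> e)
      \<le> ereal ((measure \<mu> (dil_set {-a<..<a} e) - measure \<mu> {-a<..<a}) / e)"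
    unfolding eventually_at_right_field by (intro exI[of _ 1]) simp
  then have "Liminf (at_right 0) (\<lambda>e. ereal (\<phi> e)) \<le> dil_meas \<mu> {-a<..<a}"
    unfolding dil_meas_def by (rule Liminf_mono)
  moreover have "G \<ge> 0" using prob_space.prob_le_1[OF prob] by (simp add: G_def)
  then have "Liminf (at_right 0) (\<lambda>e. ereal (\<phi> e)) = ereal (- 2 * G * ln G)"
    unfolding \<phi>_def
    by (intro lim_imp_Liminf[OF trivial_limit_at_right_real] tendsto_ereal[OF tendsto_powr_dilation_quotient])
  ultimately show ?thesis by (simp add: G_def)
qed

end

theorem propositionp:
  fixes \<mu> :: "real measure"
  assumes "prob_space \<mu>" and "sets \<mu> = sets borel"
    and "symmetric_measure \<mu>" and "log_concave_measure \<mu>"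
    and "K \<in> Ks1"
  shows "dil_meas \<mu> K \<ge> ereal (- 2 * (1 - measure \<mu> K) * ln (1 - measure \<mu> K))"
  using assms(5)
proof (cases rule: Ks1_cases)
  case 1
  have "measure \<mu> UNIV = 1"
    using prob_space.prob_space[OF assms(1)] sets_eq_imp_space_eq[OF assms(2)] by simp
  moreover have "dil_set UNIV e = UNIV" for e by (simp add: dil_set_def)
  ultimately show ?thesis by (simp add: 1 dil_meas_def Liminf_const)
next
  case (2 a)
  then show ?thesis using dil_meas_interval_ge[OF assms(1-4)] by simp
qed

end
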